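(* Let $G=(V,E)$ be a simple undirected graph with $n=|V|$ vertices and $m=|E|$ edges, let $b$ be a real number, and let $$\mathcal{P}_1=\Big\{(x,y)\in\mathbb{R}^m_{+}\times[0,1]^n:\ 1-y_u-y_v\le x_{uv}\ \text{for all } \{u,v\}\in E,\ \ \textstyle\sum_{v\in V}y_v\le b\Big\}.$$ Then: (1) for every edge $\{u,v\}\in E$, the inequality $x_{uv}\ge 0$ is facet-defining for $\mathcal{P}_1$ if $b\ge 2$; (2) for every vertex $v\in V$, the inequality $y_v\ge 0$ is facet-defining for $\mathcal{P}_1$ if $b\ge 1$; (3) for every vertex $v\in V$, the inequality $y_v\le 1$ is facet-defining for $\mathcal{P}_1$ if $b\ge 2$.
   Context: $x$ is indexed by edges and $y$ by vertices of $G$; $\mathcal{P}_1$ is the linear relaxation of the MIP formulation of the 1-hop distance-based critical node detection problem. An inequality is facet-defining if it is valid for $\mathcal{P}_1$ and the face it induces has dimension $\dim\mathcal{P}_1-1$. *)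

theory Defs
  imports "HOL-Analysis.Analysis"
begin

definition simple_graph :: "('e::finite \<Rightarrow> 'v::finite set) \<Rightarrow> bool" where
  "simple_graph ends \<longleftrightarrow> inj ends \<and> (\<forall>e. card (ends e) = 2)"

definition P1 :: "('e::finite \<Rightarrow> 'v::finite set) \<Rightarrow> real \<Rightarrow> ((real^'e) \<times> (real^'v)) set" where
  "P1 ends b = {z. let x = fst z; y = snd z in
      (\<forall>e. 0 \<le> x $ e) \<and> (\<forall>v. 0 \<le> y $ v \<and> y $ v \<le> 1) \<and>
      (\<forall>e u v. ends e = {u, v} \<longrightarrow> 1 - y $ u - y $ v \<le> x $ e) \<and>
      (\<Sum>v\<in>UNIV. y $ v) \<le> b}"

definition facet_defining :: "'a::euclidean_space set \<Rightarrow> 'a \<Rightarrow> real \<Rightarrow> bool" where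
  "facet_defining P c d \<longleftrightarrow>
     (\<forall>z\<in>P. c \<bullet> z \<le> d) \<and> aff_dim (P \<inter> {z. c \<bullet> z = d}) = aff_dim P - 1"

end

theory Submission
  imports Defs
begin

text \<open>Each inequality is facet-defining because it has a point z0 on its hyperplane at which every
  other constraint of P1 is strict: x = 2 on all edges (except x_e = 0 for the edge in question), and
  y equal to the prescribed value on at most two vertices and small elsewhere.  Near z0 the polytope
  coincides with the halfspace of the inequality, so P1 is full-dimensional and the induced face
  contains an open piece of the hyperplane.\<close>

lemma facet_defining_if_locally_halfspace:
  fixes P T :: "'a::euclidean_space set"
  assumes "c \<noteq> 0" and valid: "\<forall>z\<in>P. c \<bullet> z \<le> d"
    and "open T" "z0 \<in> T" "c \<bullet> z0 = d"
    and local: "\<And>z. z \<in> T \<Longrightarrow> c \<bullet> z \<le> d \<Longrightarrow> z \<in> P"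
  shows "facet_defining P c d"
proof -
  let ?H = "{z. c \<bullet> z = d}"
  have "T \<inter> {z. c \<bullet> z < d} \<noteq> {}"
    using assms open_Int_closure_eq_empty[of T "{z. c \<bullet> z < d}"] by auto
  moreover have "T \<inter> {z. c \<bullet> z < d} \<subseteq> interior P"
    using local \<open>open T\<close> by (intro interior_maximal) (auto intro: open_Int open_halfspace_lt)
  ultimately have dim_P: "aff_dim P = DIM('a)"
    by (intro aff_dim_nonempty_interior) blast
  have "aff_dim (?H \<inter> T) = aff_dim ?H"
    using assms by (intro aff_dim_convex_Int_open convex_hyperplane) auto
  moreover have "aff_dim (?H \<inter> T) \<le> aff_dim (P \<inter> ?H)" "aff_dim (P \<inter> ?H) \<le> aff_dim ?H"
    using local by (intro aff_dim_subset; auto)+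
  ultimately have "aff_dim (P \<inter> ?H) = DIM('a) - 1"
    using \<open>c \<noteq> 0\<close> by simp
  with dim_P valid show ?thesis
    unfolding facet_defining_def by simp
qed

lemma inner_Pair_0_left:
  "(a, 0) \<bullet> z = a \<bullet> fst z" "(0, b) \<bullet> z = b \<bullet> snd z"
  by (simp_all add: inner_commute inner_Pair_0)

lemma P1_memberI:
  assumes "\<forall>v. 0 \<le> snd z $ v \<and> snd z $ v \<le> 1" and "(\<Sum>v\<in>UNIV. snd z $ v) \<le> b"
    and "\<forall>e. 1 \<le> fst z $ e \<or> 0 \<le> fst z $ e \<and> (\<forall>u v. ends e = {u, v} \<longrightarrow> 1 \<le> snd z $ u + snd z $ v)"
  shows "z \<in> P1 ends b"
proof -
  have x_nonneg: "0 \<le> fst z $ e" for e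
    using assms(3) by (meson order.trans zero_le_one)
  moreover have "1 - snd z $ u - snd z $ v \<le> fst z $ e" if "ends e = {u, v}" for e u v
  proof -
    have "1 \<le> fst z $ e \<or> 1 \<le> snd z $ u + snd z $ v"
      using assms(3) that by blast
    then show ?thesis
      using x_nonneg[of e] assms(1)[rule_format, of u] assms(1)[rule_format, of v] by auto
  qed
  ultimately show ?thesis
    using assms(1,2) unfolding P1_def by simp
qed

definition level_on :: "'v::finite set \<Rightarrow> real \<Rightarrow> real^'v" where
  "level_on S a = (\<chi> w. if w \<in> S then a else 1 / (2 * CARD('v)))"

lemma level_on_inside [simp]: "w \<in> S \<Longrightarrow> level_on S a $ w = a"
  by (simp add: level_on_def)

lemma level_on_gt_0: "0 < a \<or> w \<notin> S \<Longrightarrow> 0 < level_on S a $ w"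
  by (auto simp: level_on_def)

lemma level_on_lt_1:
  fixes S :: "'v::finite set"
  assumes "a < 1 \<or> w \<notin> S"
  shows "level_on S a $ w < 1"
proof -
  have "0 < CARD('v)"
    by (simp add: card_gt_0_iff)
  then have "1 < 2 * real CARD('v)"
    by linarith
  with assms show ?thesis
    by (auto simp: level_on_def field_simps)
qed

lemma sum_level_on_less:
  fixes S :: "'v::finite set"
  assumes "S \<noteq> {}"
  shows "(\<Sum>w\<in>UNIV. level_on S a $ w) < a * card S + 1/2"
proof -
  have "card S > 0" using assms by (simp add: card_gt_0_iff)
  moreover have "card S \<le> CARD('v)" by (rule card_mono) auto
  ultimately have "real (CARD('v) - card S) / (2 * CARD('v)) < 1/2"
    by (simp add: field_simps of_nat_diff)
  then show ?thesis
    by (simp add: level_on_def sum.If_cases Int_absorb1 Compl_eq_Diff_UNIV card_Diff_subset mult.commute)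
qed

lemma facet_defining_P1_x_ge_0:
  fixes ends :: "'e::finite \<Rightarrow> 'v::finite set"
  assumes "b \<ge> 2" and "card (ends e) = 2"
  shows "facet_defining (P1 ends b) (- axis e 1, 0) 0"
proof -
  obtain u w where uw: "ends e = {u, w}" "u \<noteq> w"
    using assms(2) card_2_iff by metis
  define T :: "((real^'e) \<times> (real^'v)) set" where
    "T = (\<Inter>e'\<in>-{e}. {z. 1 < fst z $ e'}) \<inter> (\<Inter>x. {z. 0 < snd z $ x}) \<inter> (\<Inter>x. {z. snd z $ x < 1})
      \<inter> {z. 1 < snd z $ u + snd z $ w} \<inter> {z. (\<Sum>x\<in>UNIV. snd z $ x) < b}"
  \<comment> \<open>With x_e = 0 the edge constraint of e becomes y_u + y_w \<ge> 1; the value 3/5 makes it strict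
    while keeping the total below 6/5 + 1/2 < b.\<close>
  define z0 :: "(real^'e) \<times> (real^'v)" where
    "z0 = (\<chi> e'. if e' = e then 0 else 2, level_on {u, w} (3/5))"
  have "(\<Sum>x\<in>UNIV. snd z0 $ x) < 2"
    using sum_level_on_less[of "{u, w}" "3/5"] uw by (simp add: z0_def)
  with assms have "z0 \<in> T"
    by (auto simp: T_def z0_def level_on_gt_0 level_on_lt_1)
  show ?thesis
  proof (rule facet_defining_if_locally_halfspace[of _ _ _ T z0])
    show "open T"
      unfolding T_def by (intro open_Int open_INT finite ballI open_Collect_less continuous_intros)
    show "z \<in> P1 ends b" if "z \<in> T" "(- axis e 1, 0) \<bullet> z \<le> 0" for z
    proof (rule P1_memberI)
      have x_large: "1 < fst z $ e'" if "e' \<noteq> e" for e'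
        using \<open>z \<in> T\<close> that by (auto simp: T_def)
      have "0 \<le> fst z $ e"
        using that(2) by (simp add: inner_Pair_0_left inner_axis')
      moreover have "1 \<le> snd z $ a + snd z $ c" if "ends e = {a, c}" for a c
        using \<open>z \<in> T\<close> that uw by (auto simp: T_def doubleton_eq_iff)
      ultimately show "\<forall>e'. 1 \<le> fst z $ e' \<or> 0 \<le> fst z $ e' \<and>
          (\<forall>a c. ends e' = {a, c} \<longrightarrow> 1 \<le> snd z $ a + snd z $ c)"
        using x_large by (metis less_imp_le)
    qed (use \<open>z \<in> T\<close> in \<open>auto simp: T_def less_imp_le\<close>)
  qed (use \<open>z0 \<in> T\<close> in \<open>auto simp: P1_def z0_def inner_axis' axis_eq_0_iff zero_prod_def\<close>)
qed

lemma facet_defining_P1_y_ge_0: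
  fixes ends :: "'e::finite \<Rightarrow> 'v::finite set"
  assumes "b \<ge> 1"
  shows "facet_defining (P1 ends b) (0, - axis v 1) 0"
proof -
  define T :: "((real^'e) \<times> (real^'v)) set" where
    "T = (\<Inter>e. {z. 1 < fst z $ e}) \<inter> (\<Inter>w\<in>-{v}. {z. 0 < snd z $ w}) \<inter> (\<Inter>w. {z. snd z $ w < 1})
      \<inter> {z. (\<Sum>w\<in>UNIV. snd z $ w) < b}"
  define z0 :: "(real^'e) \<times> (real^'v)" where
    "z0 = (\<chi> e. 2, level_on {v} 0)"
  have "(\<Sum>w\<in>UNIV. snd z0 $ w) < 1"
    using sum_level_on_less[of "{v}" 0] by (simp add: z0_def)
  with assms have "z0 \<in> T"
    by (auto simp: T_def z0_def level_on_gt_0 level_on_lt_1)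
  show ?thesis
  proof (rule facet_defining_if_locally_halfspace[of _ _ _ T z0])
    show "open T"
      unfolding T_def by (intro open_Int open_INT finite ballI open_Collect_less continuous_intros)
    show "z \<in> P1 ends b" if "z \<in> T" "(0, - axis v 1) \<bullet> z \<le> 0" for z
    proof (rule P1_memberI)
      have "0 \<le> snd z $ w" for w
        using that by (cases "w = v") (auto simp: T_def inner_Pair_0_left inner_axis' less_imp_le)
      with \<open>z \<in> T\<close> show "\<forall>w. 0 \<le> snd z $ w \<and> snd z $ w \<le> 1"
        by (auto simp: T_def less_imp_le)
    qed (use \<open>z \<in> T\<close> in \<open>auto simp: T_def less_imp_le\<close>)
  qed (use \<open>z0 \<in> T\<close> in \<open>auto simp: P1_def z0_def inner_axis' axis_eq_0_iff zero_prod_def\<close>)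
qed

lemma facet_defining_P1_y_le_1:
  fixes ends :: "'e::finite \<Rightarrow> 'v::finite set"
  assumes "b \<ge> 2"
  shows "facet_defining (P1 ends b) (0, axis v 1) 1"
proof -
  define T :: "((real^'e) \<times> (real^'v)) set" where
    "T = (\<Inter>e. {z. 1 < fst z $ e}) \<inter> (\<Inter>w. {z. 0 < snd z $ w}) \<inter> (\<Inter>w\<in>-{v}. {z. snd z $ w < 1})
      \<inter> {z. (\<Sum>w\<in>UNIV. snd z $ w) < b}"
  define z0 :: "(real^'e) \<times> (real^'v)" where
    "z0 = (\<chi> e. 2, level_on {v} 1)"
  have "(\<Sum>w\<in>UNIV. snd z0 $ w) < 2"
    using sum_level_on_less[of "{v}" 1] by (simp add: z0_def)
  with assms have "z0 \<in> T"
    by (auto simp: T_def z0_def level_on_gt_0 level_on_lt_1)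
  show ?thesis
  proof (rule facet_defining_if_locally_halfspace[of _ _ _ T z0])
    show "open T"
      unfolding T_def by (intro open_Int open_INT finite ballI open_Collect_less continuous_intros)
    show "z \<in> P1 ends b" if "z \<in> T" "(0, axis v 1) \<bullet> z \<le> 1" for z
    proof (rule P1_memberI)
      have "snd z $ w \<le> 1" for w
        using that by (cases "w = v") (auto simp: T_def inner_Pair_0_left inner_axis' less_imp_le)
      with \<open>z \<in> T\<close> show "\<forall>w. 0 \<le> snd z $ w \<and> snd z $ w \<le> 1"
        by (auto simp: T_def less_imp_le)
    qed (use \<open>z \<in> T\<close> in \<open>auto simp: T_def less_imp_le\<close>)
  qed (use \<open>z0 \<in> T\<close> in \<open>auto simp: P1_def z0_def inner_axis' axis_eq_0_iff zero_prod_def\<close>)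
qed

theorem proposition2:
  fixes ends :: "'e::finite \<Rightarrow> 'v::finite set" and b :: real
  assumes "simple_graph ends"
  shows "(b \<ge> 2 \<longrightarrow> (\<forall>e. facet_defining (P1 ends b) (- axis e 1, 0) 0))
       \<and> (b \<ge> 1 \<longrightarrow> (\<forall>v. facet_defining (P1 ends b) (0, - axis v 1) 0))
       \<and> (b \<ge> 2 \<longrightarrow> (\<forall>v. facet_defining (P1 ends b) (0, axis v 1) 1))"
proof -
  have "card (ends e) = 2" for e
    using assms by (simp add: simple_graph_def)
  then show ?thesis
    using facet_defining_P1_x_ge_0 facet_defining_P1_y_ge_0 facet_defining_P1_y_le_1 by blast
qed

end
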